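(* Under the assumptions and notation of the $\textsc{Lars}$ iteration with $\beta_1=0,\lambda=0$ (blockwise smoothness constants $L_i$, layerwise variance bounds $\sigma_i^2$, minibatch of $b$ i.i.d. samples, $\alpha_l\le\phi\le\alpha_u$, constant step size $\eta_t$), each step satisfies $$\mathbb{E}[f(x_{t+1})\mid x_t] \le f(x_t) - \eta_t\alpha_l\sum_{i=1}^h\|\nabla_i f(x_t)\| + 2\eta_t\alpha_u\frac{\|\sigma\|_1}{\sqrt b}+\frac{\eta_t^2\alpha_u^2}{2}\|L\|_1 .$$
   Context: $f(x)=\mathbb{E}_{s\sim\mathbb{P}}[\ell(x,s)]$ with $x\in\mathbb{R}^d$ split into $h$ blocks $x^{(i)}\in\mathbb{R}^{d_i}$; $\nabla_i f$ is the gradient w.r.t. block $i$. Assumptions: $\|\nabla_i\ell(x,s)-\nabla_i\ell(y,s)\|\le L_i\|x^{(i)}-y^{(i)}\|$ for all $x,y,s,i$, $L=(L_1,\dots,L_h)^\top$; $\mathbb{E}\|\nabla_i\ell(x,s)-\nabla_i f(x)\|^2\le\sigma_i^2$, $\sigma=(\sigma_1,\dots,\sigma_h)^\top$. The iteration is $x_{t+1}^{(i)}=x_t^{(i)}-\eta_t\phi(\|x_t^{(i)}\|)g_t^{(i)}/\|g_t^{(i)}\|$ for $i\in[h]$, where $g_t=\frac1b\sum_{s\in\mathcal{S}_t}\nabla\ell(x_t,s)$ with $\mathcal{S}_t$ a set of $b$ i.i.d. samples from $\mathbb{P}$ independent of the past, $g_t^{(i)}\neq0$, and $\phi:\mathbb{R}^+\to\mathbb{R}^+$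 satisfies $0<\alpha_l\le\phi(v)\le\alpha_u$. $\|\cdot\|$ is Euclidean, $\|\cdot\|_1$ is $\ell_1$. *)

theory Defs
  imports "HOL-Probability.Probability"
begin

text \<open>The block x^(i) is represented by the vector that agrees with x on S and is 0 elsewhere,
  so its Euclidean norm is the Euclidean norm of x^(i).\<close>
definition blk :: "'n set \<Rightarrow> real ^ 'n \<Rightarrow> real ^ 'n" where
  "blk S x = (\<chi> j. if j \<in> S then x $ j else 0)"

definition minibatch_grad ::
  "(real ^ 'n \<Rightarrow> 's \<Rightarrow> real ^ 'n) \<Rightarrow> nat \<Rightarrow> real ^ 'n \<Rightarrow> (nat \<Rightarrow> 's) \<Rightarrow> real ^ 'n" where
  "minibatch_grad G b x S = (1 / real b) *\<^sub>R (\<Sum>k<b. G x (S k))"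

definition lars_step ::
  "('n set) list \<Rightarrow> real \<Rightarrow> (real \<Rightarrow> real) \<Rightarrow> real ^ 'n \<Rightarrow> real ^ 'n \<Rightarrow> real ^ 'n" where
  "lars_step Bs \<eta> \<phi> x g =
     x - (\<Sum>i<length Bs. (\<eta> * \<phi> (norm (blk (Bs ! i) x)) / norm (blk (Bs ! i) g)) *\<^sub>R blk (Bs ! i) g)"

end

theory Submission
  imports Defs
begin

(*
  Integrating the blockwise descent inequality of the sample losses shows that f is blockwise
  smooth with gradient E[grad l(x,s)], i.e. f(x + d) <= f x + grad f(x) . d + sum_i |L_i| |d_i|^2 / 2.
  A LARS step moves block i by a vector of length at most eta alpha_u, which bounds the quadratic
  term; in the linear term, <grad_i f, g_i> / |g_i| >= |grad_i f| - 2 |g_i - grad_i f| reduces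
  everything to the block errors of the minibatch gradient.  For independent mean-zero samples the
  cross terms vanish, so E |g_i - grad_i f|^2 <= sigma_i^2 / b, and Jensen gives
  E |g_i - grad_i f| <= sigma_i / sqrt b.
*)

section \<open>Blocks of a vector\<close>

definition block_partition :: "'n set list \<Rightarrow> bool" where
  "block_partition Bs \<longleftrightarrow>
     (\<forall>i<length Bs. \<forall>j<length Bs. i \<noteq> j \<longrightarrow> Bs ! i \<inter> Bs ! j = {}) \<and> (\<Union>i<length Bs. Bs ! i) = UNIV"

lemma blk_nth: "blk S x $ j = (if j \<in> S then x $ j else 0)"
  by (simp add: blk_def)

lemma blk_add: "blk S (x + y) = blk S x + blk S y"
  by (simp add: vec_eq_iff blk_nth)

lemma blk_diff: "blk S (x - y) = blk S x - blk S y"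
  by (simp add: vec_eq_iff blk_nth)

lemma blk_minus: "blk S (- x) = - blk S x"
  by (simp add: vec_eq_iff blk_nth)

lemma blk_scaleR: "blk S (c *\<^sub>R x) = c *\<^sub>R blk S x"
  by (simp add: vec_eq_iff blk_nth)

lemma blk_sum: "blk S (sum f A) = (\<Sum>a\<in>A. blk S (f a))"
  by (induction A rule: infinite_finite_induct) (auto simp: vec_eq_iff blk_nth blk_add)

lemma blk_blk: "blk A (blk B x) = blk (A \<inter> B) x"
  by (simp add: vec_eq_iff blk_nth)

lemma bounded_linear_blk: "bounded_linear (blk S)"
  by (rule bounded_linearI') (auto simp: blk_add blk_scaleR)

lemma borel_measurable_blk [measurable]:
  "f \<in> borel_measurable M \<Longrightarrow> (\<lambda>x. blk S (f x)) \<in> borel_measurable M"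
  by (rule borel_measurable_continuous_on[OF linear_continuous_on[OF bounded_linear_blk]])

lemma norm_blk_le: "norm (blk S x) \<le> norm x"
  unfolding norm_vec_def by (rule L2_set_mono) (auto simp: blk_nth)

lemma sum_over_unique_block:
  assumes "block_partition Bs"
  shows "(\<Sum>i<length Bs. if j \<in> Bs ! i then c else 0) = (c :: 'a :: comm_monoid_add)"
proof -
  obtain i0 where i0: "i0 < length Bs" "j \<in> Bs ! i0"
    using assms unfolding block_partition_def by blast
  then have "{i. i < length Bs \<and> j \<in> Bs ! i} = {i0}"
    using assms unfolding block_partition_def by blast
  then show ?thesis
    by (simp add: sum.If_cases lessThan_def Collect_conj_eq[symmetric])
qed

lemma sum_blk:
  assumes "block_partition Bs"
  shows "(\<Sum>i<length Bs. blk (Bs ! i) x) = x"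
  by (simp add: vec_eq_iff blk_nth sum_component sum_over_unique_block[OF assms])

lemma inner_eq_sum_blk:
  assumes "block_partition Bs"
  shows "u \<bullet> v = (\<Sum>i<length Bs. blk (Bs ! i) u \<bullet> blk (Bs ! i) v)"
proof -
  have "(\<Sum>i<length Bs. blk (Bs ! i) u \<bullet> blk (Bs ! i) v)
      = (\<Sum>j\<in>UNIV. \<Sum>i<length Bs. if j \<in> Bs ! i then u $ j * v $ j else 0)"
    by (simp add: inner_vec_def blk_nth if_distrib sum.swap[of _ "{..<length Bs}"] cong: if_cong)
  then show ?thesis
    by (simp add: sum_over_unique_block[OF assms] inner_vec_def)
qed

lemma norm_le_sum_norm_blk:
  assumes "block_partition Bs"
  shows "norm x \<le> (\<Sum>i<length Bs. norm (blk (Bs ! i) x))"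
  using norm_sum[of "\<lambda>i. blk (Bs ! i) x" "{..<length Bs}"] by (simp add: sum_blk[OF assms])

lemma integrable_of_integrable_blk:
  assumes "block_partition Bs" "\<And>i. i < length Bs \<Longrightarrow> integrable M (\<lambda>s. blk (Bs ! i) (F s))"
  shows "integrable M F"
  using Bochner_Integration.integrable_sum[of "{..<length Bs}" M "\<lambda>i s. blk (Bs ! i) (F s)"] assms(2)
  by (simp add: sum_blk[OF assms(1)])

section \<open>Blockwise descent lemma\<close>

definition smoothness_form :: "'n set list \<Rightarrow> (nat \<Rightarrow> real) \<Rightarrow> real ^ 'n \<Rightarrow> real" where
  "smoothness_form Bs L d = (\<Sum>i<length Bs. \<bar>L i\<bar> * (norm (blk (Bs ! i) d))\<^sup>2)"

lemma smoothness_form_le: "smoothness_form Bs L d \<le> (\<Sum>i<length Bs. \<bar>L i\<bar>) * (norm d)\<^sup>2"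
  unfolding smoothness_form_def sum_distrib_right
  by (intro sum_mono mult_left_mono power_mono norm_blk_le) auto

lemma abs_diff_le_of_deriv_le_linear:
  fixes \<psi> \<psi>' :: "real \<Rightarrow> real"
  assumes deriv: "\<And>t. 0 \<le> t \<Longrightarrow> t \<le> 1 \<Longrightarrow> (\<psi> has_real_derivative \<psi>' t) (at t)"
    and bound: "\<And>t. 0 \<le> t \<Longrightarrow> t \<le> 1 \<Longrightarrow> \<bar>\<psi>' t\<bar> \<le> K * t"
  shows "\<bar>\<psi> 1 - \<psi> 0\<bar> \<le> K / 2"
proof -
  have sq: "((\<lambda>t. K / 2 * t\<^sup>2) has_real_derivative K * t) (at t)" for t
    by (auto intro!: derivative_eq_intros)
  have "\<psi> 1 - K / 2 * 1\<^sup>2 \<le> \<psi> 0 - K / 2 * 0\<^sup>2"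
  proof (rule DERIV_nonpos_imp_nonincreasing[where f = "\<lambda>t. \<psi> t - K / 2 * t\<^sup>2"])
    fix t :: real
    assume t: "0 \<le> t" "t \<le> 1"
    show "\<exists>y. ((\<lambda>t. \<psi> t - K / 2 * t\<^sup>2) has_real_derivative y) (at t) \<and> y \<le> 0"
      using DERIV_diff[OF deriv[OF t] sq] bound[OF t] by (auto simp: abs_le_iff)
  qed simp
  moreover have "\<psi> 0 + K / 2 * 0\<^sup>2 \<le> \<psi> 1 + K / 2 * 1\<^sup>2"
  proof (rule DERIV_nonneg_imp_nondecreasing[where f = "\<lambda>t. \<psi> t + K / 2 * t\<^sup>2"])
    fix t :: real
    assume t: "0 \<le> t" "t \<le> 1"
    show "\<exists>y. ((\<lambda>t. \<psi> t + K / 2 * t\<^sup>2) has_real_derivative y) (at t) \<and> y \<ge> 0"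
      using DERIV_add[OF deriv[OF t] sq] bound[OF t] by (auto simp: abs_le_iff)
  qed simp
  ultimately show ?thesis
    unfolding abs_le_iff by simp
qed

lemma abs_remainder_le_of_gradient_increment:
  fixes l :: "'a::real_inner \<Rightarrow> real"
  assumes deriv: "\<And>t. (l has_derivative (\<lambda>v. g (y + t *\<^sub>R d) \<bullet> v)) (at (y + t *\<^sub>R d))"
    and incr: "\<And>t. 0 \<le> t \<Longrightarrow> \<bar>(g (y + t *\<^sub>R d) - g y) \<bullet> d\<bar> \<le> K * t"
  shows "\<bar>l (y + d) - l y - g y \<bullet> d\<bar> \<le> K / 2"
proof -
  have "((\<lambda>t. l (y + t *\<^sub>R d) - t * (g y \<bullet> d)) has_real_derivative (g (y + t *\<^sub>R d) - g y) \<bullet> d) (at t)"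
    for t
  proof -
    have "((\<lambda>t. l (y + t *\<^sub>R d)) has_derivative (\<lambda>s. g (y + t *\<^sub>R d) \<bullet> (s *\<^sub>R d))) (at t)"
      by (rule has_derivative_compose[of "\<lambda>t. y + t *\<^sub>R d" "\<lambda>s. s *\<^sub>R d" t UNIV l, OF _ deriv])
        (auto intro!: derivative_eq_intros)
    then have "((\<lambda>t. l (y + t *\<^sub>R d)) has_real_derivative g (y + t *\<^sub>R d) \<bullet> d) (at t)"
      unfolding has_field_derivative_def by (rule has_derivative_eq_rhs) (auto simp: fun_eq_iff)
    then show ?thesis
      by (auto intro!: derivative_eq_intros simp: inner_diff_left)
  qed
  from abs_diff_le_of_deriv_le_linear[OF this incr]
  show ?thesis
    by (simp add: algebra_simps)
qed

lemma blockwise_gradient_increment: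
  assumes "block_partition Bs"
    and lip: "\<And>i y z. i < length Bs \<Longrightarrow>
       norm (blk (Bs ! i) (g y) - blk (Bs ! i) (g z)) \<le> L i * norm (blk (Bs ! i) (y - z))"
    and "0 \<le> t"
  shows "\<bar>(g (y + t *\<^sub>R d) - g y) \<bullet> d\<bar> \<le> smoothness_form Bs L d * t"
proof -
  have block: "\<bar>blk (Bs ! i) (g (y + t *\<^sub>R d) - g y) \<bullet> blk (Bs ! i) d\<bar>
      \<le> \<bar>L i\<bar> * (norm (blk (Bs ! i) d))\<^sup>2 * t" if "i < length Bs" for i
  proof -
    have "\<bar>blk (Bs ! i) (g (y + t *\<^sub>R d) - g y) \<bullet> blk (Bs ! i) d\<bar>
        \<le> norm (blk (Bs ! i) (g (y + t *\<^sub>R d) - g y)) * norm (blk (Bs ! i) d)"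
      by (rule Cauchy_Schwarz_ineq2)
    also have "\<dots> \<le> L i * (t * norm (blk (Bs ! i) d)) * norm (blk (Bs ! i) d)"
      using lip[OF that, of "y + t *\<^sub>R d" y] \<open>0 \<le> t\<close>
      by (intro mult_right_mono) (auto simp: blk_diff blk_scaleR)
    also have "\<dots> \<le> \<bar>L i\<bar> * (t * norm (blk (Bs ! i) d)) * norm (blk (Bs ! i) d)"
      using \<open>0 \<le> t\<close> by (intro mult_right_mono) auto
    finally show ?thesis
      by (simp add: power2_eq_square mult_ac)
  qed
  have "\<bar>(g (y + t *\<^sub>R d) - g y) \<bullet> d\<bar>
      \<le> (\<Sum>i<length Bs. \<bar>blk (Bs ! i) (g (y + t *\<^sub>R d) - g y) \<bullet> blk (Bs ! i) d\<bar>)"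
    unfolding inner_eq_sum_blk[OF assms(1), of "g (y + t *\<^sub>R d) - g y"] by (rule sum_abs)
  also have "\<dots> \<le> smoothness_form Bs L d * t"
    unfolding smoothness_form_def sum_distrib_right by (intro sum_mono block) simp
  finally show ?thesis .
qed

lemma blockwise_descent:
  fixes l :: "real ^ 'n \<Rightarrow> real"
  assumes "block_partition Bs"
    and deriv: "\<And>y. (l has_derivative (\<lambda>v. g y \<bullet> v)) (at y)"
    and lip: "\<And>i y z. i < length Bs \<Longrightarrow>
       norm (blk (Bs ! i) (g y) - blk (Bs ! i) (g z)) \<le> L i * norm (blk (Bs ! i) (y - z))"
  shows "\<bar>l (y + d) - l y - g y \<bullet> d\<bar> \<le> smoothness_form Bs L d / 2"
  by (rule abs_remainder_le_of_gradient_increment[OF deriv blockwise_gradient_increment[OF assms(1) lip]])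

lemma has_derivative_inner_unique_of_remainder_le:
  fixes f :: "'a::real_inner \<Rightarrow> real"
  assumes deriv: "(f has_derivative (\<lambda>v. a \<bullet> v)) (at x)"
    and remainder: "\<And>h. \<bar>f (x + h) - f x - m \<bullet> h\<bar> \<le> C * (norm h)\<^sup>2"
  shows "a = m"
proof -
  have "(f has_derivative (\<lambda>v. m \<bullet> v)) (at x)"
    unfolding has_derivative_iff_norm
  proof (intro conjI bounded_linear_inner_right)
    show "((\<lambda>y. norm (f y - f x - m \<bullet> (y - x)) / norm (y - x)) \<longlongrightarrow> 0) (at x)"
    proof (rule Lim_null_comparison)
      show "\<forall>\<^sub>F y in at x. norm (norm (f y - f x - m \<bullet> (y - x)) / norm (y - x)) \<le> C * norm (y - x)"
      proof (rule always_eventually, intro allI)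
        fix y
        show "norm (norm (f y - f x - m \<bullet> (y - x)) / norm (y - x)) \<le> C * norm (y - x)"
          using remainder[of "y - x"]
          by (cases "y = x") (simp_all add: divide_le_eq power2_eq_square mult.assoc)
      qed
      have "((\<lambda>y. C * norm (y - x)) \<longlongrightarrow> C * norm (x - x)) (at x)"
        by (intro tendsto_intros)
      then show "((\<lambda>y. C * norm (y - x)) \<longlongrightarrow> 0) (at x)"
        by simp
    qed
  qed
  from fun_cong[OF has_derivative_unique[OF deriv this], of "a - m"]
  have "(a - m) \<bullet> (a - m) = 0"
    by (simp add: inner_diff_left)
  then show ?thesis
    by simp
qed

section \<open>One LARS step\<close>

lemma inner_normalized_ge:
  fixes u w :: "'a::real_inner"
  assumes "0 \<le> \<alpha>l" "\<alpha>l \<le> p" "p \<le> \<alpha>u"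
  shows "\<alpha>l * norm u - 2 * \<alpha>u * norm (w - u) \<le> p / norm w * (u \<bullet> w)"
proof (cases "w = 0")
  case True
  have "\<alpha>l * norm u \<le> 2 * \<alpha>u * norm u"
    using assms by (intro mult_right_mono) auto
  then show ?thesis
    using True by simp
next
  case False
  define a where "a = (u \<bullet> w) / norm w"
  have "u \<bullet> w = norm w * norm w + (u - w) \<bullet> w"
    by (simp add: inner_diff_left flip: power2_norm_eq_inner power2_eq_square)
  also have "\<dots> \<ge> norm w * norm w - norm (u - w) * norm w"
    using Cauchy_Schwarz_ineq2[of "u - w" w] by linarith
  finally have "a \<ge> norm w - norm (w - u)"
    using False by (simp add: a_def field_simps norm_minus_commute)
  moreover have "norm u \<le> norm w + norm (w - u)"
    using norm_triangle_ineq4[of w "w - u"] by simp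
  ultimately have a_ge: "a \<ge> norm u - 2 * norm (w - u)"
    by linarith
  have "\<alpha>l * norm u - 2 * \<alpha>u * norm (w - u) \<le> p * a"
  proof (cases "a \<ge> 0")
    case True
    have "\<alpha>l * (norm u - 2 * norm (w - u)) \<le> \<alpha>l * a" "\<alpha>l * a \<le> p * a"
      "\<alpha>l * norm (w - u) \<le> \<alpha>u * norm (w - u)"
      using a_ge True assms by (auto intro: mult_left_mono mult_right_mono)
    then show ?thesis
      by (simp add: algebra_simps)
  next
    case False
    have "\<alpha>u * (norm u - 2 * norm (w - u)) \<le> \<alpha>u * a" "\<alpha>u * a \<le> p * a"
      "\<alpha>l * norm u \<le> \<alpha>u * norm u"
      using a_ge False assms by (auto intro: mult_left_mono mult_right_mono mult_right_mono_neg)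
    then show ?thesis
      by (simp add: algebra_simps)
  qed
  then show ?thesis
    by (simp add: a_def)
qed

lemma blk_lars_step_diff:
  assumes "block_partition Bs" "i < length Bs"
  shows "blk (Bs ! i) (lars_step Bs \<eta> \<phi> x g - x)
    = - ((\<eta> * \<phi> (norm (blk (Bs ! i) x)) / norm (blk (Bs ! i) g)) *\<^sub>R blk (Bs ! i) g)"
proof -
  let ?c = "\<lambda>j. \<eta> * \<phi> (norm (blk (Bs ! j) x)) / norm (blk (Bs ! j) g)"
  have "blk (Bs ! i) (lars_step Bs \<eta> \<phi> x g - x) = - (\<Sum>j<length Bs. ?c j *\<^sub>R blk (Bs ! i \<inter> Bs ! j) g)"
    by (simp add: lars_step_def blk_minus blk_sum blk_scaleR blk_blk)
  also have "(\<Sum>j<length Bs. ?c j *\<^sub>R blk (Bs ! i \<inter> Bs ! j) g) = ?c i *\<^sub>R blk (Bs ! i) g"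
    using assms by (subst sum.remove[of _ i]) (auto simp: block_partition_def vec_eq_iff blk_nth)
  finally show ?thesis .
qed

lemma norm_blk_lars_step_diff_le:
  assumes "block_partition Bs" "i < length Bs" "0 \<le> \<eta>" "0 \<le> \<alpha>l"
    and \<phi>: "\<forall>v\<ge>0. \<alpha>l \<le> \<phi> v \<and> \<phi> v \<le> \<alpha>u"
  shows "norm (blk (Bs ! i) (lars_step Bs \<eta> \<phi> x g - x)) \<le> \<eta> * \<alpha>u"
proof -
  have "0 \<le> \<phi> (norm (blk (Bs ! i) x))" "\<phi> (norm (blk (Bs ! i) x)) \<le> \<alpha>u"
    using \<phi> assms(4) by (metis norm_ge_zero order.trans)+
  then show ?thesis
    using assms(3) by (simp add: blk_lars_step_diff[OF assms(1,2)] abs_mult mult_left_mono)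
qed

lemma norm_lars_step_diff_le:
  assumes "block_partition Bs" "0 \<le> \<eta>" "0 \<le> \<alpha>l"
    and "\<forall>v\<ge>0. \<alpha>l \<le> \<phi> v \<and> \<phi> v \<le> \<alpha>u"
  shows "norm (lars_step Bs \<eta> \<phi> x g - x) \<le> real (length Bs) * (\<eta> * \<alpha>u)"
proof -
  have "norm (lars_step Bs \<eta> \<phi> x g - x) \<le> (\<Sum>i<length Bs. norm (blk (Bs ! i) (lars_step Bs \<eta> \<phi> x g - x)))"
    by (rule norm_le_sum_norm_blk[OF assms(1)])
  also have "\<dots> \<le> (\<Sum>i<length Bs. \<eta> * \<alpha>u)"
    using norm_blk_lars_step_diff_le[OF assms(1) _ assms(2-4)] by (intro sum_mono) auto
  finally show ?thesis
    by simp
qed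

lemma smoothness_form_lars_step_le:
  assumes "block_partition Bs" "0 \<le> \<eta>" "0 \<le> \<alpha>l"
    and "\<forall>v\<ge>0. \<alpha>l \<le> \<phi> v \<and> \<phi> v \<le> \<alpha>u"
  shows "smoothness_form Bs L (lars_step Bs \<eta> \<phi> x g - x) \<le> \<eta>\<^sup>2 * \<alpha>u\<^sup>2 * (\<Sum>i<length Bs. \<bar>L i\<bar>)"
proof -
  have "(norm (blk (Bs ! i) (lars_step Bs \<eta> \<phi> x g - x)))\<^sup>2 \<le> (\<eta> * \<alpha>u)\<^sup>2" if "i < length Bs" for i
    using norm_blk_lars_step_diff_le[OF assms(1) that assms(2-4)] by (intro power_mono) auto
  then show ?thesis
    unfolding smoothness_form_def sum_distrib_left
    by (intro sum_mono) (auto intro!: mult_left_mono simp: power_mult_distrib mult_ac)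
qed

lemma inner_lars_step_diff_le:
  assumes "block_partition Bs" "0 \<le> \<eta>" "0 \<le> \<alpha>l"
    and \<phi>: "\<forall>v\<ge>0. \<alpha>l \<le> \<phi> v \<and> \<phi> v \<le> \<alpha>u"
  shows "gf \<bullet> (lars_step Bs \<eta> \<phi> x g - x)
    \<le> - \<eta> * \<alpha>l * (\<Sum>i<length Bs. norm (blk (Bs ! i) gf))
      + 2 * \<eta> * \<alpha>u * (\<Sum>i<length Bs. norm (blk (Bs ! i) g - blk (Bs ! i) gf))"
proof -
  have block: "blk (Bs ! i) gf \<bullet> blk (Bs ! i) (lars_step Bs \<eta> \<phi> x g - x)
      \<le> - \<eta> * \<alpha>l * norm (blk (Bs ! i) gf) + 2 * \<eta> * \<alpha>u * norm (blk (Bs ! i) g - blk (Bs ! i) gf)"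
    if "i < length Bs" for i
  proof -
    have "\<alpha>l * norm (blk (Bs ! i) gf) - 2 * \<alpha>u * norm (blk (Bs ! i) g - blk (Bs ! i) gf)
        \<le> \<phi> (norm (blk (Bs ! i) x)) / norm (blk (Bs ! i) g) * (blk (Bs ! i) gf \<bullet> blk (Bs ! i) g)"
      using \<phi> assms(3) by (intro inner_normalized_ge) auto
    from mult_left_mono[OF this assms(2)] show ?thesis
      by (simp add: blk_lars_step_diff[OF assms(1) that] algebra_simps)
  qed
  have "gf \<bullet> (lars_step Bs \<eta> \<phi> x g - x)
      = (\<Sum>i<length Bs. blk (Bs ! i) gf \<bullet> blk (Bs ! i) (lars_step Bs \<eta> \<phi> x g - x))"
    by (rule inner_eq_sum_blk[OF assms(1)])
  also have "\<dots> \<le> (\<Sum>i<length Bs. - \<eta> * \<alpha>l * norm (blk (Bs ! i) gf)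
      + 2 * \<eta> * \<alpha>u * norm (blk (Bs ! i) g - blk (Bs ! i) gf))"
    using block by (intro sum_mono) auto
  finally show ?thesis
    by (simp add: sum_subtractf sum_distrib_left sum_negf)
qed

lemma lars_step_descent:
  assumes "block_partition Bs" "0 \<le> \<eta>" "0 \<le> \<alpha>l"
    and "\<forall>v\<ge>0. \<alpha>l \<le> \<phi> v \<and> \<phi> v \<le> \<alpha>u"
    and descent: "\<And>d. f (x + d) \<le> f x + gf \<bullet> d + smoothness_form Bs L d / 2"
  shows "f (lars_step Bs \<eta> \<phi> x g) \<le> f x - \<eta> * \<alpha>l * (\<Sum>i<length Bs. norm (blk (Bs ! i) gf))
      + 2 * \<eta> * \<alpha>u * (\<Sum>i<length Bs. norm (blk (Bs ! i) g - blk (Bs ! i) gf))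
      + \<eta>\<^sup>2 * \<alpha>u\<^sup>2 / 2 * (\<Sum>i<length Bs. \<bar>L i\<bar>)"
  using descent[of "lars_step Bs \<eta> \<phi> x g - x"]
    inner_lars_step_diff_le[OF assms(1-4), of gf x g] smoothness_form_lars_step_le[OF assms(1-4), of L x g]
  by simp

section \<open>Sample means of independent random vectors\<close>

lemma
  fixes Z :: "'a \<Rightarrow> 'b::{banach, second_countable_topology}"
  assumes "prob_space M" and [measurable]: "Z \<in> borel_measurable M"
    and bound: "(\<integral>\<^sup>+ s. ennreal ((norm (Z s))\<^sup>2) \<partial>M) \<le> ennreal c" and "0 \<le> c"
  shows integrable_norm_sq_of_nn_integral_le: "integrable M (\<lambda>s. (norm (Z s))\<^sup>2)"
    and integral_norm_sq_le_of_nn_integral_le: "(\<integral>s. (norm (Z s))\<^sup>2 \<partial>M) \<le> c"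
proof -
  show sq: "integrable M (\<lambda>s. (norm (Z s))\<^sup>2)"
    using bound by (auto simp: integrable_iff_bounded order.strict_trans1)
  have "ennreal (\<integral>s. (norm (Z s))\<^sup>2 \<partial>M) \<le> ennreal c"
    using bound nn_integral_eq_integral[OF sq] by simp
  then show "(\<integral>s. (norm (Z s))\<^sup>2 \<partial>M) \<le> c"
    using \<open>0 \<le> c\<close> by (simp add: ennreal_le_iff)
qed

lemma (in finite_measure) integrable_of_integrable_norm_sq:
  fixes Z :: "'a \<Rightarrow> 'b::{banach, second_countable_topology}"
  assumes "Z \<in> borel_measurable M" "integrable M (\<lambda>s. (norm (Z s))\<^sup>2)"
  shows "integrable M Z"
  using square_integrable_imp_integrable[of "\<lambda>s. norm (Z s)"] assms
  by (simp add: integrable_norm_iff)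

lemma (in prob_space) expectation_le_sqrt_expectation_sq:
  fixes X :: "'a \<Rightarrow> real"
  assumes "X \<in> borel_measurable M" "integrable M (\<lambda>x. (X x)\<^sup>2)"
  shows "expectation X \<le> sqrt (expectation (\<lambda>x. (X x)\<^sup>2))"
proof -
  have "(expectation X)\<^sup>2 \<le> expectation (\<lambda>x. (X x)\<^sup>2)"
    using variance_positive[of X] variance_eq[OF square_integrable_imp_integrable[OF assms] assms(2)]
    by simp
  then show ?thesis
    using real_sqrt_le_mono real_sqrt_abs abs_ge_self order.trans by metis
qed

lemma
  fixes g :: "'a \<Rightarrow> 'b::{banach, second_countable_topology}"
  assumes "\<And>i. i \<in> I \<Longrightarrow> prob_space (M i)" "i \<in> I" "g \<in> borel_measurable (M i)"
  shows integrable_PiM_component_iff: "integrable (PiM I M) (\<lambda>\<omega>. g (\<omega> i)) \<longleftrightarrow> integrable (M i) g"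
    and integral_PiM_component: "(\<integral>\<omega>. g (\<omega> i) \<partial>PiM I M) = (\<integral>s. g s \<partial>M i)"
proof -
  have "distr (PiM I M) (M i) (\<lambda>\<omega>. \<omega> i) = M i"
    by (rule distr_PiM_component[OF assms(1,2)])
  then show "integrable (PiM I M) (\<lambda>\<omega>. g (\<omega> i)) \<longleftrightarrow> integrable (M i) g"
    and "(\<integral>\<omega>. g (\<omega> i) \<partial>PiM I M) = (\<integral>s. g s \<partial>M i)"
    using integrable_distr_eq[OF measurable_component_singleton[of i I M, OF assms(2)] assms(3)]
      integral_distr[OF measurable_component_singleton[of i I M, OF assms(2)] assms(3)]
    by simp_all
qed

lemma indep_vars_PiM_components:
  assumes "\<And>i. i \<in> I \<Longrightarrow> prob_space (M i)" "I \<noteq> {}"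
  shows "prob_space.indep_vars (PiM I M) M (\<lambda>i \<omega>. \<omega> i) I"
proof -
  interpret Q: prob_space "PiM I M"
    using assms(1) by (rule prob_space_PiM)
  have "distr (PiM I M) (PiM I M) (\<lambda>\<omega>. \<lambda>i\<in>I. \<omega> i) = distr (PiM I M) (PiM I M) (\<lambda>\<omega>. \<omega>)"
    by (rule distr_cong) (auto simp: space_PiM)
  also have "\<dots> = (\<Pi>\<^sub>M i\<in>I. distr (PiM I M) (M i) (\<lambda>\<omega>. \<omega> i))"
    using assms(1) by (simp add: distr_PiM_component cong: PiM_cong)
  finally show ?thesis
    using assms(2) by (subst Q.indep_vars_iff_distr_eq_PiM') auto
qed

lemma indep_var_PiM_components:
  assumes "\<And>i. i \<in> I \<Longrightarrow> prob_space (M i)" "k \<in> I" "l \<in> I" "k \<noteq> l"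
    and "F \<in> measurable (M k) N" "H \<in> measurable (M l) N'"
  shows "prob_space.indep_var (PiM I M) N (\<lambda>\<omega>. F (\<omega> k)) N' (\<lambda>\<omega>. H (\<omega> l))"
proof -
  interpret Q: prob_space "PiM I M"
    using assms(1) by (rule prob_space_PiM)
  have "Q.indep_var (PiM {k} M) (\<lambda>\<omega>. restrict \<omega> {k}) (PiM {l} M) (\<lambda>\<omega>. restrict \<omega> {l})"
    using Q.indep_var_restrict[OF indep_vars_PiM_components[OF assms(1)], of "{k}" "{l}"] assms(2-4)
    by auto
  then have "Q.indep_var N ((\<lambda>\<omega>. F (\<omega> k)) \<circ> (\<lambda>\<omega>. restrict \<omega> {k})) N' ((\<lambda>\<omega>. H (\<omega> l)) \<circ> (\<lambda>\<omega>. restrict \<omega> {l}))"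
    by (rule Q.indep_var_compose) (use assms(5,6) in measurable)
  then show ?thesis
    by (simp add: comp_def)
qed

lemma
  fixes Z :: "'s \<Rightarrow> 'b::euclidean_space"
  assumes P: "prob_space P" and Z [measurable]: "Z \<in> borel_measurable P"
    and sq: "integrable P (\<lambda>s. (norm (Z s))\<^sup>2)" and mean: "integral\<^sup>L P Z = 0"
    and "k \<in> I" "l \<in> I"
  shows integrable_inner_PiM_components: "integrable (PiM I (\<lambda>_. P)) (\<lambda>\<omega>. Z (\<omega> k) \<bullet> Z (\<omega> l))"
    and integral_inner_PiM_components:
      "(\<integral>\<omega>. Z (\<omega> k) \<bullet> Z (\<omega> l) \<partial>PiM I (\<lambda>_. P)) = (if k = l then \<integral>s. (norm (Z s))\<^sup>2 \<partial>P else 0)"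
proof -
  let ?Q = "PiM I (\<lambda>_. P)"
  interpret prob_space P
    by (rule P)
  interpret Q: prob_space ?Q
    using P by (rule prob_space_PiM)
  note component = integrable_PiM_component_iff[OF P] integral_PiM_component[OF P]
  have "integrable ?Q (\<lambda>\<omega>. Z (\<omega> k) \<bullet> Z (\<omega> l))
      \<and> (\<integral>\<omega>. Z (\<omega> k) \<bullet> Z (\<omega> l) \<partial>?Q) = (if k = l then \<integral>s. (norm (Z s))\<^sup>2 \<partial>P else 0)"
  proof (cases "k = l")
    case True
    then have "(\<lambda>\<omega>. Z (\<omega> k) \<bullet> Z (\<omega> l)) = (\<lambda>\<omega>. (norm (Z (\<omega> k)))\<^sup>2)"
      by (simp add: power2_norm_eq_inner)
    then show ?thesis
      using component[OF \<open>k \<in> I\<close>, of "\<lambda>s. (norm (Z s))\<^sup>2"] sq True by simp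
  next
    case False
    have Z_integrable: "integrable P Z"
      by (rule integrable_of_integrable_norm_sq[OF Z sq])
    have coord: "integrable ?Q (\<lambda>\<omega>. (Z (\<omega> k) \<bullet> j) * (Z (\<omega> l) \<bullet> j))
        \<and> (\<integral>\<omega>. (Z (\<omega> k) \<bullet> j) * (Z (\<omega> l) \<bullet> j) \<partial>?Q) = 0" for j
    proof -
      have indep: "Q.indep_var borel (\<lambda>\<omega>. Z (\<omega> k) \<bullet> j) borel (\<lambda>\<omega>. Z (\<omega> l) \<bullet> j)"
        using False by (intro indep_var_PiM_components P \<open>k \<in> I\<close> \<open>l \<in> I\<close>) measurable
      have "integrable P (\<lambda>s. Z s \<bullet> j)" "(\<integral>s. Z s \<bullet> j \<partial>P) = 0"
        using Z_integrable mean by (simp_all add: integral_inner_left)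
      then show ?thesis
        using Q.indep_var_lebesgue_integral[OF indep] Q.indep_var_integrable[OF indep]
          component[OF \<open>k \<in> I\<close>, of "\<lambda>s. Z s \<bullet> j"] component[OF \<open>l \<in> I\<close>, of "\<lambda>s. Z s \<bullet> j"]
        by simp
    qed
    have "(\<lambda>\<omega>. Z (\<omega> k) \<bullet> Z (\<omega> l)) = (\<lambda>\<omega>. \<Sum>j\<in>Basis. (Z (\<omega> k) \<bullet> j) * (Z (\<omega> l) \<bullet> j))"
      by (rule ext) (rule euclidean_inner)
    then show ?thesis
      using coord False by (simp add: Bochner_Integration.integral_sum)
  qed
  then show "integrable ?Q (\<lambda>\<omega>. Z (\<omega> k) \<bullet> Z (\<omega> l))"
    and "(\<integral>\<omega>. Z (\<omega> k) \<bullet> Z (\<omega> l) \<partial>?Q) = (if k = l then \<integral>s. (norm (Z s))\<^sup>2 \<partial>P else 0)"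
    by auto
qed

lemma
  fixes Z :: "'s \<Rightarrow> 'b::euclidean_space"
  assumes P: "prob_space P" and Z [measurable]: "Z \<in> borel_measurable P"
    and sq: "integrable P (\<lambda>s. (norm (Z s))\<^sup>2)" and mean: "integral\<^sup>L P Z = 0" and "0 < b"
  shows integrable_norm_sample_mean:
      "integrable (PiM {..<b} (\<lambda>_. P)) (\<lambda>\<omega>. norm ((1 / real b) *\<^sub>R (\<Sum>k<b. Z (\<omega> k))))"
    and integral_norm_sample_mean_le:
      "(\<integral>\<omega>. norm ((1 / real b) *\<^sub>R (\<Sum>k<b. Z (\<omega> k))) \<partial>PiM {..<b} (\<lambda>_. P))
         \<le> sqrt ((\<integral>s. (norm (Z s))\<^sup>2 \<partial>P) / real b)"
proof -
  let ?Q = "PiM {..<b} (\<lambda>_. P)"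
  interpret Q: prob_space ?Q
    using P by (rule prob_space_PiM)
  define X where "X = (\<lambda>\<omega>. norm ((1 / real b) *\<^sub>R (\<Sum>k<b. Z (\<omega> k))))"
  have X_sq: "(X \<omega>)\<^sup>2 = (\<Sum>k<b. \<Sum>l<b. Z (\<omega> k) \<bullet> Z (\<omega> l)) / (real b)\<^sup>2" for \<omega>
  proof -
    have "(norm (\<Sum>k<b. Z (\<omega> k)))\<^sup>2 = (\<Sum>k<b. \<Sum>l<b. Z (\<omega> k) \<bullet> Z (\<omega> l))"
      by (simp add: power2_norm_eq_inner inner_sum_left inner_sum_right inner_commute)
    then show ?thesis
      by (simp add: X_def power_mult_distrib divide_inverse power_inverse mult.commute)
  qed
  note cross = integrable_inner_PiM_components[OF P Z sq mean, where I = "{..<b}", simplified]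
    integral_inner_PiM_components[OF P Z sq mean, where I = "{..<b}", simplified]
  have X_sq_integrable: "integrable ?Q (\<lambda>\<omega>. (X \<omega>)\<^sup>2)"
    unfolding X_sq using cross(1) by (intro integrable_divide_zero Bochner_Integration.integrable_sum) auto
  have "(\<integral>\<omega>. (\<Sum>k<b. \<Sum>l<b. Z (\<omega> k) \<bullet> Z (\<omega> l)) \<partial>?Q)
      = (\<Sum>k<b. \<Sum>l<b. if k = l then \<integral>s. (norm (Z s))\<^sup>2 \<partial>P else 0)"
    using cross
    by (subst Bochner_Integration.integral_sum, fastforce intro: Bochner_Integration.integrable_sum)
      (simp add: Bochner_Integration.integral_sum)
  then have "(\<integral>\<omega>. (X \<omega>)\<^sup>2 \<partial>?Q) = real b * (\<integral>s. (norm (Z s))\<^sup>2 \<partial>P) / (real b)\<^sup>2"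
    unfolding X_sq by simp
  also have "\<dots> = (\<integral>s. (norm (Z s))\<^sup>2 \<partial>P) / real b"
    by (simp add: power2_eq_square)
  finally have "(\<integral>\<omega>. (X \<omega>)\<^sup>2 \<partial>?Q) = (\<integral>s. (norm (Z s))\<^sup>2 \<partial>P) / real b" .
  moreover have X_measurable: "X \<in> borel_measurable ?Q"
    unfolding X_def by measurable
  ultimately show "integrable ?Q (\<lambda>\<omega>. norm ((1 / real b) *\<^sub>R (\<Sum>k<b. Z (\<omega> k))))"
    "(\<integral>\<omega>. norm ((1 / real b) *\<^sub>R (\<Sum>k<b. Z (\<omega> k))) \<partial>?Q) \<le> sqrt ((\<integral>s. (norm (Z s))\<^sup>2 \<partial>P) / real b)"
    using Q.expectation_le_sqrt_expectation_sq[OF X_measurable X_sq_integrable]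
      Q.square_integrable_imp_integrable[OF X_measurable X_sq_integrable]
    unfolding X_def by simp_all
qed

lemma (in prob_space) expectation_le_of_le_sum:
  fixes X :: "'a \<Rightarrow> real"
  assumes "integrable M X" "\<And>\<omega>. \<omega> \<in> space M \<Longrightarrow> X \<omega> \<le> a + c * (\<Sum>i\<in>I. Y i \<omega>)" "0 \<le> c"
    and "\<And>i. i \<in> I \<Longrightarrow> integrable M (Y i)" "\<And>i. i \<in> I \<Longrightarrow> expectation (Y i) \<le> e i"
  shows "expectation X \<le> a + c * (\<Sum>i\<in>I. e i)"
proof -
  have "expectation X \<le> expectation (\<lambda>\<omega>. a + c * (\<Sum>i\<in>I. Y i \<omega>))"
    using assms(1,2,4) by (intro integral_mono) auto
  also have "\<dots> = a + c * (\<Sum>i\<in>I. expectation (Y i))"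
    using assms(4) by (simp add: prob_space Bochner_Integration.integral_sum)
  also have "\<dots> \<le> a + c * (\<Sum>i\<in>I. e i)"
    using assms(3,5) by (intro add_left_mono mult_left_mono sum_mono) auto
  finally show ?thesis .
qed

section \<open>Expected descent of LARS\<close>

lemma integrable_of_nn_integral_blk_variance_le:
  assumes P: "prob_space P" and "block_partition Bs" and F [measurable]: "F \<in> borel_measurable P"
    and variance: "\<And>i. i < length Bs \<Longrightarrow>
      (\<integral>\<^sup>+ s. ennreal ((norm (blk (Bs ! i) (F s) - blk (Bs ! i) c))\<^sup>2) \<partial>P) \<le> ennreal ((\<sigma> i)\<^sup>2)"
  shows "integrable P F"
proof (rule integrable_of_integrable_blk[OF \<open>block_partition Bs\<close>])
  interpret prob_space P
    by (rule P)
  fix i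
  assume "i < length Bs"
  have "integrable P (\<lambda>s. (norm (blk (Bs ! i) (F s) - blk (Bs ! i) c))\<^sup>2)"
    by (rule integrable_norm_sq_of_nn_integral_le[OF P _ variance[OF \<open>i < length Bs\<close>] zero_le_power2])
      measurable
  then have "integrable P (\<lambda>s. blk (Bs ! i) (F s) - blk (Bs ! i) c)"
    by (rule integrable_of_integrable_norm_sq[rotated]) measurable
  from Bochner_Integration.integrable_add[OF this integrable_const[of "blk (Bs ! i) c"]]
  show "integrable P (\<lambda>s. blk (Bs ! i) (F s))"
    by simp
qed

lemma expected_blockwise_descent:
  fixes loss :: "real ^ 'n \<Rightarrow> 's \<Rightarrow> real"
  assumes P: "prob_space P" and "block_partition Bs"
    and loss_integrable: "\<And>y. integrable P (loss y)"
    and loss_grad: "\<And>y s. s \<in> space P \<Longrightarrow> ((\<lambda>z. loss z s) has_derivative (\<lambda>v. G y s \<bullet> v)) (at y)"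
    and smooth: "\<And>i y z s. i < length Bs \<Longrightarrow> s \<in> space P \<Longrightarrow>
       norm (blk (Bs ! i) (G y s) - blk (Bs ! i) (G z s)) \<le> L i * norm (blk (Bs ! i) (y - z))"
    and G_integrable: "integrable P (G x)"
  shows "\<bar>(\<integral>s. loss (x + h) s \<partial>P) - (\<integral>s. loss x s \<partial>P) - (\<integral>s. G x s \<partial>P) \<bullet> h\<bar>
    \<le> smoothness_form Bs L h / 2"
proof -
  interpret prob_space P
    by (rule P)
  have "(\<integral>s. loss (x + h) s \<partial>P) - (\<integral>s. loss x s \<partial>P) - (\<integral>s. G x s \<partial>P) \<bullet> h
      = (\<integral>s. loss (x + h) s - loss x s - G x s \<bullet> h \<partial>P)"
    using loss_integrable G_integrable by simp
  also have "\<bar>\<dots>\<bar> \<le> (\<integral>s. \<bar>loss (x + h) s - loss x s - G x s \<bullet> h\<bar> \<partial>P)"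
    using integral_norm_bound[of P "\<lambda>s. loss (x + h) s - loss x s - G x s \<bullet> h"] by simp
  also have "\<dots> \<le> (\<integral>s. smoothness_form Bs L h / 2 \<partial>P)"
    using loss_integrable G_integrable
    by (intro integral_mono blockwise_descent[OF \<open>block_partition Bs\<close>] loss_grad smooth) auto
  finally show ?thesis
    by (simp add: prob_space)
qed

lemma
  fixes loss :: "real ^ 'n \<Rightarrow> 's \<Rightarrow> real"
  assumes P: "prob_space P" and "block_partition Bs"
    and loss_integrable: "\<And>y. integrable P (loss y)"
    and f_def: "\<And>y. f y = (\<integral>s. loss y s \<partial>P)"
    and loss_grad: "\<And>y s. s \<in> space P \<Longrightarrow> ((\<lambda>z. loss z s) has_derivative (\<lambda>v. G y s \<bullet> v)) (at y)"
    and smooth: "\<And>i y z s. i < length Bs \<Longrightarrow> s \<in> space P \<Longrightarrow>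
       norm (blk (Bs ! i) (G y s) - blk (Bs ! i) (G z s)) \<le> L i * norm (blk (Bs ! i) (y - z))"
    and f_grad: "(f has_derivative (\<lambda>v. gf \<bullet> v)) (at x)"
    and G_integrable: "integrable P (G x)"
  shows gradient_eq_expected_gradient: "gf = (\<integral>s. G x s \<partial>P)"
    and expected_loss_descent: "f (x + d) \<le> f x + gf \<bullet> d + smoothness_form Bs L d / 2"
proof -
  have remainder: "\<bar>f (x + h) - f x - (\<integral>s. G x s \<partial>P) \<bullet> h\<bar> \<le> smoothness_form Bs L h / 2" for h
    unfolding f_def
    by (rule expected_blockwise_descent[OF P \<open>block_partition Bs\<close>, where loss = loss and G = G])
      (use loss_integrable loss_grad smooth G_integrable in auto)
  show mean: "gf = (\<integral>s. G x s \<partial>P)"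
  proof (rule has_derivative_inner_unique_of_remainder_le[OF f_grad])
    show "\<bar>f (x + h) - f x - (\<integral>s. G x s \<partial>P) \<bullet> h\<bar> \<le> (\<Sum>i<length Bs. \<bar>L i\<bar>) / 2 * (norm h)\<^sup>2" for h
      using remainder[of h] smoothness_form_le[of Bs L h] by simp
  qed
  show "f (x + d) \<le> f x + gf \<bullet> d + smoothness_form Bs L d / 2"
    using remainder[of d] unfolding mean abs_le_iff by linarith
qed

lemma
  fixes G :: "real ^ 'n \<Rightarrow> 's \<Rightarrow> real ^ 'n"
  assumes P: "prob_space P" and G [measurable]: "G x \<in> borel_measurable P"
    and G_integrable: "integrable P (G x)" and mean: "gf = (\<integral>s. G x s \<partial>P)"
    and variance: "(\<integral>\<^sup>+ s. ennreal ((norm (blk S (G x s) - blk S gf))\<^sup>2) \<partial>P) \<le> ennreal (\<sigma>\<^sup>2)"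
    and "0 < b"
  shows integrable_norm_blk_minibatch_error:
      "integrable (PiM {..<b} (\<lambda>_. P)) (\<lambda>\<omega>. norm (blk S (minibatch_grad G b x \<omega>) - blk S gf))"
    and integral_norm_blk_minibatch_error_le:
      "(\<integral>\<omega>. norm (blk S (minibatch_grad G b x \<omega>) - blk S gf) \<partial>PiM {..<b} (\<lambda>_. P)) \<le> \<bar>\<sigma>\<bar> / sqrt (real b)"
proof -
  interpret prob_space P
    by (rule P)
  define Z where "Z s = blk S (G x s) - blk S gf" for s
  have Z_measurable: "Z \<in> borel_measurable P"
    unfolding Z_def by measurable
  have Z_sq: "integrable P (\<lambda>s. (norm (Z s))\<^sup>2)" "(\<integral>s. (norm (Z s))\<^sup>2 \<partial>P) \<le> \<sigma>\<^sup>2"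
    using integrable_norm_sq_of_nn_integral_le[OF P Z_measurable]
      integral_norm_sq_le_of_nn_integral_le[OF P Z_measurable] variance
    by (auto simp: Z_def)
  have "integral\<^sup>L P Z = 0"
    using integrable_bounded_linear[OF bounded_linear_blk G_integrable, of S]
      integral_bounded_linear[OF bounded_linear_blk G_integrable, of S]
    by (simp add: Z_def[abs_def] mean prob_space)
  note sample_mean = integrable_norm_sample_mean[OF P Z_measurable Z_sq(1) this \<open>0 < b\<close>]
    integral_norm_sample_mean_le[OF P Z_measurable Z_sq(1) this \<open>0 < b\<close>]
  have "blk S (minibatch_grad G b x \<omega>) - blk S gf = (1 / real b) *\<^sub>R (\<Sum>k<b. Z (\<omega> k))" for \<omega>
    using \<open>0 < b\<close>
    by (simp add: minibatch_grad_def Z_def blk_scaleR blk_sum sum_subtractf scaleR_diff_right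
        sum_constant_scaleR del: sum_constant)
  moreover have "sqrt ((\<integral>s. (norm (Z s))\<^sup>2 \<partial>P) / real b) \<le> \<bar>\<sigma>\<bar> / sqrt (real b)"
    using Z_sq(2) by (simp add: real_sqrt_divide divide_right_mono flip: real_sqrt_abs)
  ultimately show "integrable (PiM {..<b} (\<lambda>_. P)) (\<lambda>\<omega>. norm (blk S (minibatch_grad G b x \<omega>) - blk S gf))"
    "(\<integral>\<omega>. norm (blk S (minibatch_grad G b x \<omega>) - blk S gf) \<partial>PiM {..<b} (\<lambda>_. P)) \<le> \<bar>\<sigma>\<bar> / sqrt (real b)"
    using sample_mean by simp_all
qed

lemma integrable_comp_lars_step:
  fixes f :: "real ^ 'n \<Rightarrow> real"
  assumes "prob_space M" "continuous_on UNIV f" and g [measurable]: "g \<in> borel_measurable M"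
    and "block_partition Bs" "0 \<le> \<eta>" "0 \<le> \<alpha>l" "\<forall>v\<ge>0. \<alpha>l \<le> \<phi> v \<and> \<phi> v \<le> \<alpha>u"
  shows "integrable M (\<lambda>\<omega>. f (lars_step Bs \<eta> \<phi> x (g \<omega>)))"
proof -
  interpret prob_space M
    by fact
  define R where "R = real (length Bs) * (\<eta> * \<alpha>u)"
  have "compact (f ` cball x R)"
    using assms(2) by (intro compact_continuous_image compact_cball) (auto intro: continuous_on_subset)
  then obtain B where B: "\<And>y. y \<in> cball x R \<Longrightarrow> \<bar>f y\<bar> \<le> B"
    by (meson bounded_real compact_imp_bounded image_eqI)
  have "lars_step Bs \<eta> \<phi> x (g \<omega>) \<in> cball x R" for \<omega>
    using norm_lars_step_diff_le[OF assms(4-7)] by (simp add: R_def dist_norm norm_minus_commute)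
  moreover have "(\<lambda>\<omega>. lars_step Bs \<eta> \<phi> x (g \<omega>)) \<in> borel_measurable M"
    unfolding lars_step_def by measurable
  ultimately show ?thesis
    using B by (intro integrable_const_bound[where B = B] borel_measurable_continuous_on[OF assms(2)]) auto
qed

lemma expectation_lars_step_le:
  fixes f :: "real ^ 'n \<Rightarrow> real"
  assumes M: "prob_space M" and "block_partition Bs" "0 \<le> \<eta>" "0 \<le> \<alpha>l"
    and \<phi>: "\<forall>v\<ge>0. \<alpha>l \<le> \<phi> v \<and> \<phi> v \<le> \<alpha>u"
    and "continuous_on UNIV f" "g \<in> borel_measurable M"
    and descent: "\<And>d. f (x + d) \<le> f x + gf \<bullet> d + smoothness_form Bs L d / 2"
    and error_integrable: "\<And>i. i < length Bs \<Longrightarrow> integrable M (\<lambda>\<omega>. norm (blk (Bs ! i) (g \<omega>) - blk (Bs ! i) gf))"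
    and error_le: "\<And>i. i < length Bs \<Longrightarrow> (\<integral>\<omega>. norm (blk (Bs ! i) (g \<omega>) - blk (Bs ! i) gf) \<partial>M) \<le> e i"
  shows "(\<integral>\<omega>. f (lars_step Bs \<eta> \<phi> x (g \<omega>)) \<partial>M)
    \<le> f x - \<eta> * \<alpha>l * (\<Sum>i<length Bs. norm (blk (Bs ! i) gf)) + 2 * \<eta> * \<alpha>u * (\<Sum>i<length Bs. e i)
      + \<eta>\<^sup>2 * \<alpha>u\<^sup>2 / 2 * (\<Sum>i<length Bs. \<bar>L i\<bar>)"
proof -
  interpret prob_space M
    by (rule M)
  have "0 \<le> \<alpha>u"
    using \<phi> \<open>0 \<le> \<alpha>l\<close> by (meson order.trans order_refl)
  have "(\<integral>\<omega>. f (lars_step Bs \<eta> \<phi> x (g \<omega>)) \<partial>M)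
    \<le> f x - \<eta> * \<alpha>l * (\<Sum>i<length Bs. norm (blk (Bs ! i) gf)) + \<eta>\<^sup>2 * \<alpha>u\<^sup>2 / 2 * (\<Sum>i<length Bs. \<bar>L i\<bar>)
      + 2 * \<eta> * \<alpha>u * (\<Sum>i<length Bs. e i)"
  proof (rule expectation_le_of_le_sum[where Y = "\<lambda>i \<omega>. norm (blk (Bs ! i) (g \<omega>) - blk (Bs ! i) gf)"])
    show "integrable M (\<lambda>\<omega>. f (lars_step Bs \<eta> \<phi> x (g \<omega>)))"
      by (rule integrable_comp_lars_step) (use assms in auto)
    show "f (lars_step Bs \<eta> \<phi> x (g \<omega>))
        \<le> f x - \<eta> * \<alpha>l * (\<Sum>i<length Bs. norm (blk (Bs ! i) gf)) + \<eta>\<^sup>2 * \<alpha>u\<^sup>2 / 2 * (\<Sum>i<length Bs. \<bar>L i\<bar>)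
          + 2 * \<eta> * \<alpha>u * (\<Sum>i<length Bs. norm (blk (Bs ! i) (g \<omega>) - blk (Bs ! i) gf))" for \<omega>
      using lars_step_descent[OF assms(2-5) descent, of "g \<omega>"] by linarith
  qed (use assms \<open>0 \<le> \<alpha>u\<close> in auto)
  then show ?thesis
    by linarith
qed

theorem mainTheorem2:
  fixes P :: "'s measure"
    and loss :: "real ^ 'n \<Rightarrow> 's \<Rightarrow> real"
    and G :: "real ^ 'n \<Rightarrow> 's \<Rightarrow> real ^ 'n"
    and f :: "real ^ 'n \<Rightarrow> real"
    and Gf :: "real ^ 'n \<Rightarrow> real ^ 'n"
    and Bs :: "('n set) list"
    and L \<sigma> :: "nat \<Rightarrow> real"
    and \<phi> :: "real \<Rightarrow> real"
    and \<alpha>l \<alpha>u \<eta> :: real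
    and b :: nat
    and x :: "real ^ 'n"
  assumes P: "prob_space P"
    and blocks_nonempty: "\<forall>i<length Bs. Bs ! i \<noteq> {}"
    and blocks_disjoint: "\<forall>i<length Bs. \<forall>j<length Bs. i \<noteq> j \<longrightarrow> Bs ! i \<inter> Bs ! j = {}"
    and blocks_cover: "(\<Union>i<length Bs. Bs ! i) = UNIV"
    and loss_integrable: "\<forall>y. integrable P (loss y)"
    and f_def: "\<forall>y. f y = (\<integral>s. loss y s \<partial>P)"
    and loss_grad: "\<forall>y. \<forall>s\<in>space P. ((\<lambda>z. loss z s) has_derivative (\<lambda>v. G y s \<bullet> v)) (at y)"
    and grad_meas: "\<forall>y. G y \<in> borel_measurable P"
    and f_grad: "\<forall>y. (f has_derivative (\<lambda>v. Gf y \<bullet> v)) (at y)"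
    and smooth: "\<forall>i<length Bs. \<forall>y z. \<forall>s\<in>space P.
         norm (blk (Bs ! i) (G y s) - blk (Bs ! i) (G z s)) \<le> L i * norm (blk (Bs ! i) (y - z))"
    and variance: "\<forall>i<length Bs. \<forall>y.
         (\<integral>\<^sup>+ s. ennreal ((norm (blk (Bs ! i) (G y s) - blk (Bs ! i) (Gf y)))\<^sup>2) \<partial>P) \<le> ennreal ((\<sigma> i)\<^sup>2)"
    and phi_bounds: "0 < \<alpha>l" "\<forall>v\<ge>0. \<alpha>l \<le> \<phi> v \<and> \<phi> v \<le> \<alpha>u"
    and eta_pos: "0 < \<eta>"
    and b_pos: "1 \<le> b"
    and g_nonzero: "AE S in PiM {..<b} (\<lambda>_. P).
         \<forall>i<length Bs. blk (Bs ! i) (minibatch_grad G b x S) \<noteq> 0"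
  shows "(\<integral>S. f (lars_step Bs \<eta> \<phi> x (minibatch_grad G b x S)) \<partial>(PiM {..<b} (\<lambda>_. P)))
         \<le> f x - \<eta> * \<alpha>l * (\<Sum>i<length Bs. norm (blk (Bs ! i) (Gf x)))
             + 2 * \<eta> * \<alpha>u * (\<Sum>i<length Bs. \<bar>\<sigma> i\<bar>) / sqrt (real b)
             + \<eta>\<^sup>2 * \<alpha>u\<^sup>2 / 2 * (\<Sum>i<length Bs. \<bar>L i\<bar>)"
proof -
  have partition: "block_partition Bs"
    using blocks_disjoint blocks_cover by (simp add: block_partition_def)
  have G_measurable [measurable]: "G x \<in> borel_measurable P"
    using grad_meas by blast
  have block_variance: "\<And>i. i < length Bs \<Longrightarrow>
      (\<integral>\<^sup>+ s. ennreal ((norm (blk (Bs ! i) (G x s) - blk (Bs ! i) (Gf x)))\<^sup>2) \<partial>P) \<le> ennreal ((\<sigma> i)\<^sup>2)"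
    using variance by blast
  have G_integrable: "integrable P (G x)"
    by (rule integrable_of_nn_integral_blk_variance_le[OF P partition G_measurable block_variance])
  have "0 < b"
    using b_pos by simp
  note loss_model = loss_integrable[rule_format] f_def[rule_format] loss_grad[rule_format]
    smooth[rule_format] f_grad[rule_format]
  have mean: "Gf x = (\<integral>s. G x s \<partial>P)"
    by (rule gradient_eq_expected_gradient[where loss = loss and G = G and x = x, OF P partition _ _ _ _ _ G_integrable])
      (fact loss_model)+
  have "(\<integral>S. f (lars_step Bs \<eta> \<phi> x (minibatch_grad G b x S)) \<partial>PiM {..<b} (\<lambda>_. P))
      \<le> f x - \<eta> * \<alpha>l * (\<Sum>i<length Bs. norm (blk (Bs ! i) (Gf x)))
        + 2 * \<eta> * \<alpha>u * (\<Sum>i<length Bs. \<bar>\<sigma> i\<bar> / sqrt (real b))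
        + \<eta>\<^sup>2 * \<alpha>u\<^sup>2 / 2 * (\<Sum>i<length Bs. \<bar>L i\<bar>)"
  proof (rule expectation_lars_step_le[OF prob_space_PiM[OF P] partition _ _ phi_bounds(2)])
    show "continuous_on UNIV f"
      using f_grad by (intro has_derivative_continuous_on) auto
    show "minibatch_grad G b x \<in> borel_measurable (PiM {..<b} (\<lambda>_. P))"
      unfolding minibatch_grad_def[abs_def] by measurable
    show "f (x + d) \<le> f x + Gf x \<bullet> d + smoothness_form Bs L d / 2" for d
      by (rule expected_loss_descent[where loss = loss and G = G and x = x, OF P partition _ _ _ _ _ G_integrable])
        (fact loss_model)+
  qed (use eta_pos phi_bounds(1)
      integrable_norm_blk_minibatch_error[where G = G and x = x, OF P G_measurable G_integrable mean block_variance \<open>0 < b\<close>]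
      integral_norm_blk_minibatch_error_le[where G = G and x = x, OF P G_measurable G_integrable mean block_variance \<open>0 < b\<close>]
      in auto)
  then show ?thesis
    by (simp add: algebra_simps flip: sum_divide_distrib)
qed

end
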